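(* Let $n\ge1$, $k\in\{1,\dots,n\}$, scores $s_1,\dots,s_n\in\mathbb{R}$ not all equal, $p=\frac{n-k}{n}+\frac{1}{2n}$ and $f(x)=\sum_{i=1}^n\rho_p(s_i-x)$. If $x\in\mathbb{R}$ satisfies $f(x)-f(\theta_k)\le \frac{g_m\Delta}{2}$, where $g_m=\min\{\overline{m}-\frac12,\ \underline{m}+\frac12\}$, then $|x-\theta_k|\le\frac{\Delta}{2}$.
   Context: The pinball loss is $\rho_p(x)=p\,x$ if $x\ge0$ and $\rho_p(x)=-(1-p)x$ if $x<0$. The scores sorted in descending order are $\theta_1\ge\cdots\ge\theta_n$; $\theta_k$ is the $k$-th largest score. $\overline{m}$ is the number of indices $j\le k$ with $\theta_j=\theta_k$, and $\underline{m}$ is the number of indices $j>k$ with $\theta_j=\theta_k$. The minimum gap is $\Delta=\min\{|s_i-\theta_k|: s_i\ne\theta_k\}$. *)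

theory Defs
  imports Complex_Main
begin

definition pinball :: "real \<Rightarrow> real \<Rightarrow> real" where
  "pinball p x = (if x \<ge> 0 then p * x else - (1 - p) * x)"

text \<open>Scores s_1..s_n are the list s (s_i = s ! (i-1)). The sorted scores in
  descending order: theta_1 \<ge> ... \<ge> theta_n; theta_j = desc s ! (j-1).\<close>
definition desc :: "real list \<Rightarrow> real list" where
  "desc s = rev (sort s)"

definition theta :: "real list \<Rightarrow> nat \<Rightarrow> real" where
  "theta s j = desc s ! (j - 1)"

definition mbar :: "real list \<Rightarrow> nat \<Rightarrow> nat" where
  "mbar s k = card {j \<in> {1..k}. theta s j = theta s k}"

definition munder :: "real list \<Rightarrow> nat \<Rightarrow> nat" where
  "munder s k = card {j \<in> {k+1..length s}. theta s j = theta s k}"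

definition gap :: "real list \<Rightarrow> nat \<Rightarrow> real" where
  "gap s k = Min {\<bar>s ! i - theta s k\<bar> | i. i < length s \<and> s ! i \<noteq> theta s k}"

end

theory Submission
  imports Defs "HOL-Library.Multiset"
begin

text \<open>Because \<open>n (1 - p) = k - 1/2\<close>, the right derivative of the convex piecewise linear
  function \<open>f\<close> at \<open>\<theta>\<^sub>k\<close> is \<open>k - 1/2 - #{i. s\<^sub>i > \<theta>\<^sub>k}\<close>, which is at least
  \<open>mbar - 1/2\<close>, and minus its left derivative is \<open>#{i. s\<^sub>i \<ge> \<theta>\<^sub>k} - (k - 1/2)\<close>, which
  is at least \<open>munder + 1/2\<close>. Hence \<open>f x - f \<theta>\<^sub>k \<ge> g\<^sub>m \<bar>x - \<theta>\<^sub>k\<bar>\<close> with \<open>g\<^sub>m > 0\<close>,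
  and the hypothesis bounds \<open>\<bar>x - \<theta>\<^sub>k\<bar>\<close> by \<open>\<Delta>/2\<close>.\<close>

lemma sum_slope_indicator:
  fixes p :: real
  shows "(\<Sum>i<n. if P i then - p else 1 - p) = real n * (1 - p) - card {i. i < n \<and> P i}"
proof -
  have "(\<Sum>i<n. if P i then - p else 1 - p) = (\<Sum>i<n. (1 - p) - (if P i then 1 else 0))"
    by (rule sum.cong) auto
  also have "\<dots> = real n * (1 - p) - card {i. i < n \<and> P i}"
    by (simp add: sum_subtractf sum.If_cases lessThan_def Collect_conj_eq)
  finally show ?thesis .
qed

lemma card_nth_eq_card_theta:
  "card {i. i < length s \<and> P (s ! i)} = card {j \<in> {1..length s}. P (theta s j)}"
proof -
  have "mset (filter P s) = mset (filter P (desc s))"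
    by (simp add: desc_def)
  then have "card {i. i < length s \<and> P (s ! i)} = card {i. i < length s \<and> P (desc s ! i)}"
    by (metis length_filter_conv_card size_mset length_rev length_sort desc_def)
  also have "{i. i < length s \<and> P (desc s ! i)} = (\<lambda>j. j - 1) ` {j \<in> {1..length s}. P (theta s j)}"
  proof (rule set_eqI, rule iffI)
    fix i assume "i \<in> {i. i < length s \<and> P (desc s ! i)}"
    then have "Suc i \<in> {j \<in> {1..length s}. P (theta s j)}" by (simp add: theta_def)
    then show "i \<in> (\<lambda>j. j - 1) ` {j \<in> {1..length s}. P (theta s j)}" by force
  qed (auto simp: theta_def)
  also have "card \<dots> = card {j \<in> {1..length s}. P (theta s j)}"
    by (rule card_image) (auto simp: inj_on_def)
  finally show ?thesis .
qed

lemma theta_antimono: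
  assumes "1 \<le> i" "i \<le> j" "j \<le> length s"
  shows "theta s j \<le> theta s i"
  using assms sorted_nth_mono[OF sorted_sort, of "length s - j" "length s - i" s]
  by (simp add: theta_def desc_def rev_nth)

lemma card_greater_theta_add_mbar_le:
  assumes "1 \<le> k" "k \<le> length s"
  shows "card {i. i < length s \<and> s ! i > theta s k} + mbar s k \<le> k"
proof -
  let ?A = "{j \<in> {1..length s}. theta s j > theta s k}"
  let ?B = "{j \<in> {1..k}. theta s j = theta s k}"
  have "?A \<subseteq> {1..k}"
  proof
    fix j assume "j \<in> ?A"
    with theta_antimono[of k j s] assms show "j \<in> {1..k}"
      by (cases "k \<le> j") auto
  qed
  then have "card (?A \<union> ?B) \<le> card {1..k}"
    by (intro card_mono) auto
  moreover have "?A \<inter> ?B = {}" by auto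
  ultimately show ?thesis
    by (simp add: card_nth_eq_card_theta mbar_def card_Un_disjoint)
qed

lemma k_add_munder_le_card_geq_theta:
  assumes "1 \<le> k" "k \<le> length s"
  shows "k + munder s k \<le> card {i. i < length s \<and> s ! i \<ge> theta s k}"
proof -
  let ?C = "{j \<in> {k+1..length s}. theta s j = theta s k}"
  have "{1..k} \<union> ?C \<subseteq> {j \<in> {1..length s}. theta s j \<ge> theta s k}"
    using theta_antimono[of _ k s] assms by auto
  then have "card ({1..k} \<union> ?C) \<le> card {j \<in> {1..length s}. theta s j \<ge> theta s k}"
    by (intro card_mono) auto
  moreover have "{1..k} \<inter> ?C = {}" by auto
  ultimately show ?thesis
    by (simp add: card_nth_eq_card_theta munder_def card_Un_disjoint)
qed

lemma pinball_diff_ge_right: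
  assumes "0 \<le> p" "p \<le> 1" "t \<le> x"
  shows "(if a > t then - p else 1 - p) * (x - t) \<le> pinball p (a - x) - pinball p (a - t)"
  using assms unfolding pinball_def by (auto simp: algebra_simps)

lemma pinball_diff_ge_left:
  assumes "0 \<le> p" "p \<le> 1" "x \<le> t"
  shows "(if a \<ge> t then - p else 1 - p) * (x - t) \<le> pinball p (a - x) - pinball p (a - t)"
  using assms unfolding pinball_def by (auto simp: algebra_simps)

lemma pinball_sum_diff_ge_right:
  fixes a :: "nat \<Rightarrow> real"
  assumes "0 \<le> p" "p \<le> 1" "t \<le> x"
  shows "(real n * (1 - p) - card {i. i < n \<and> a i > t}) * (x - t)
           \<le> (\<Sum>i<n. pinball p (a i - x)) - (\<Sum>i<n. pinball p (a i - t))"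
proof -
  have "(real n * (1 - p) - card {i. i < n \<and> a i > t}) * (x - t)
          = (\<Sum>i<n. (if a i > t then - p else 1 - p) * (x - t))"
    by (simp add: sum_slope_indicator sum_distrib_right[symmetric])
  also have "\<dots> \<le> (\<Sum>i<n. pinball p (a i - x) - pinball p (a i - t))"
    by (intro sum_mono pinball_diff_ge_right assms)
  finally show ?thesis by (simp add: sum_subtractf)
qed

lemma pinball_sum_diff_ge_left:
  fixes a :: "nat \<Rightarrow> real"
  assumes "0 \<le> p" "p \<le> 1" "x \<le> t"
  shows "(card {i. i < n \<and> a i \<ge> t} - real n * (1 - p)) * (t - x)
           \<le> (\<Sum>i<n. pinball p (a i - x)) - (\<Sum>i<n. pinball p (a i - t))"
proof -
  have "(card {i. i < n \<and> a i \<ge> t} - real n * (1 - p)) * (t - x)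
          = (real n * (1 - p) - card {i. i < n \<and> a i \<ge> t}) * (x - t)"
    by (simp add: algebra_simps)
  also have "\<dots> = (\<Sum>i<n. (if a i \<ge> t then - p else 1 - p) * (x - t))"
    by (simp add: sum_slope_indicator sum_distrib_right[symmetric])
  also have "\<dots> \<le> (\<Sum>i<n. pinball p (a i - x) - pinball p (a i - t))"
    by (intro sum_mono pinball_diff_ge_left assms)
  finally show ?thesis by (simp add: sum_subtractf)
qed

lemma mbar_pos:
  assumes "1 \<le> k"
  shows "1 \<le> mbar s k"
proof -
  have "k \<in> {j \<in> {1..k}. theta s j = theta s k}" using assms by simp
  then have "0 < mbar s k"
    unfolding mbar_def by (intro card_gt_0_iff[THEN iffD2]) auto
  then show ?thesis by simp
qed

lemma pinball_sum_growth_at_theta: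
  fixes s :: "real list"
  defines "n \<equiv> length s"
  assumes "1 \<le> k" "k \<le> n"
    and p: "p = real (n - k) / real n + 1 / (2 * real n)"
  shows "min (real (mbar s k) - 1/2) (real (munder s k) + 1/2) * \<bar>x - theta s k\<bar>
           \<le> (\<Sum>i<n. pinball p (s ! i - x)) - (\<Sum>i<n. pinball p (s ! i - theta s k))"
proof -
  let ?t = "theta s k" and ?g = "min (real (mbar s k) - 1/2) (real (munder s k) + 1/2)"
  have "0 < n" using assms(2,3) by linarith
  then have np: "real n * (1 - p) = real k - 1/2"
    using assms(3) by (simp add: p field_simps)
  have "0 \<le> p" by (simp add: p)
  have "p \<le> 1"
  proof -
    have "0 \<le> real n * (1 - p)" using np assms(2) by simp
    with \<open>0 < n\<close> show ?thesis by (simp add: zero_le_mult_iff)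
  qed
  show ?thesis
  proof (cases "?t \<le> x")
    case True
    have slope: "?g \<le> real n * (1 - p) - card {i. i < n \<and> s ! i > ?t}"
      using card_greater_theta_add_mbar_le[of k s] assms np by simp
    have "?g * \<bar>x - ?t\<bar> = ?g * (x - ?t)" using True by simp
    also have "\<dots> \<le> (real n * (1 - p) - card {i. i < n \<and> s ! i > ?t}) * (x - ?t)"
      using slope True by (intro mult_right_mono) simp_all
    also have "\<dots> \<le> (\<Sum>i<n. pinball p (s ! i - x)) - (\<Sum>i<n. pinball p (s ! i - ?t))"
      using \<open>0 \<le> p\<close> \<open>p \<le> 1\<close> True by (rule pinball_sum_diff_ge_right)
    finally show ?thesis .
  next
    case False
    have slope: "?g \<le> card {i. i < n \<and> s ! i \<ge> ?t} - real n * (1 - p)"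
      using k_add_munder_le_card_geq_theta[of k s] assms np by simp
    have "?g * \<bar>x - ?t\<bar> = ?g * (?t - x)" using False by simp
    also have "\<dots> \<le> (card {i. i < n \<and> s ! i \<ge> ?t} - real n * (1 - p)) * (?t - x)"
      using slope False by (intro mult_right_mono) simp_all
    also have "\<dots> \<le> (\<Sum>i<n. pinball p (s ! i - x)) - (\<Sum>i<n. pinball p (s ! i - ?t))"
      using \<open>0 \<le> p\<close> \<open>p \<le> 1\<close> False by (intro pinball_sum_diff_ge_left) simp_all
    finally show ?thesis .
  qed
qed

theorem corollary1:
  fixes s :: "real list" and k :: nat and x :: real
  assumes "length s \<ge> 1"
    and "1 \<le> k" and "k \<le> length s"
    and "\<exists>i<length s. \<exists>j<length s. s ! i \<noteq> s ! j"
    and "f (x) - f (theta s k) \<le> min (real (mbar s k) - 1/2) (real (munder s k) + 1/2) * gap s k / 2"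
    and "p = real (length s - k) / real (length s) + 1 / (2 * real (length s))"
    and "f = (\<lambda>y. \<Sum>i<length s. pinball p (s ! i - y))"
  shows "\<bar>x - theta s k\<bar> \<le> gap s k / 2"
proof -
  let ?g = "min (real (mbar s k) - 1/2) (real (munder s k) + 1/2)"
  have "?g > 0" using mbar_pos[OF assms(2), of s] by simp
  moreover have "?g * \<bar>x - theta s k\<bar> \<le> ?g * (gap s k / 2)"
    using pinball_sum_growth_at_theta[OF assms(2,3,6), of x] assms(5,7) by simp
  ultimately show ?thesis by simp
qed

end
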